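(* Let $\lambda\in\mathbb R$ and write $u=x^2+x^4$. A smooth covector field $A$ on $\mathbb R^4$ satisfies $L_\xi A=0$ for $\xi\in\{e_{12}-e_{14}+\lambda e_2,\,e_1,\,e_3,\,e_2-e_4\}$ if and only if: (i) when $\lambda\neq0$, there are real constants $C_1,\dots,C_4$ with $$A_1=\frac{C_2}{\lambda}u+C_3,\quad A_2=\frac{C_2}{2\lambda^2}u^2+\frac{C_3}{\lambda}u+C_4,\quad A_3=C_1,\quad A_4=A_2+C_2;$$ (ii) when $\lambda=0$, $A_1=0$, $A_2=A_4=\Phi(u)$, $A_3=\Psi(u)$ for some smooth functions $\Phi,\Psi$ of one variable.
   Context: Work in $\mathbb R^4$ with Galilean (Cartesian) coordinates $x^1,x^2,x^3,x^4$ of Minkowski space (metric $\mathrm{diag}(-1,-1,-1,1)$). A potential on an open set $U\subseteq\mathbb R^4$ is a smooth covector field $A=A_i\,dx^i$; its components $A_i$ are always those with respect to the coordinates $x^i$, even when written as functions of other variables. For a vector field $\xi=\xi^k\partial_k$ the Lie derivative is $(L_\xi A)_i=\xi^k\partial_kA_i+A_k\partial_i\xi^k$. The vector fields used are, by components $(\xi^1,\xi^2,\xi^3,\xi^4)$: $e_1=(1,0,0,0)$, $e_2=(0,1,0,0)$, $e_3=(0,0,1,0)$, $e_4=(0,0,0,1)$, $e_{12}=(-x^2,x^1,0,0)$, $e_{13}=(x^3,0,-x^1,0)$, $e_{23}=(0,-x^3,x^2,0)$, $e_{14}=(x^4,0,0,x^1)$, $e_{24}=(0,x^4,0,x^2)$,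 $e_{34}=(0,0,x^4,x^3)$. A potential admits a family of vector fields if $L_\xi A=0$ for each $\xi$ in it (equivalently for every element of their linear span). "Functions" are smooth real functions; $\mathrm{ch}=\cosh$, $\mathrm{sh}=\sinh$. *)

theory Defs
  imports "HOL-Analysis.Analysis"
begin

type_synonym pt = "real \<times> real \<times> real \<times> real"

fun bvec :: "nat \<Rightarrow> pt" where
  "bvec (Suc 0) = (1,0,0,0)"
| "bvec (Suc (Suc 0)) = (0,1,0,0)"
| "bvec (Suc (Suc (Suc 0))) = (0,0,1,0)"
| "bvec (Suc (Suc (Suc (Suc 0)))) = (0,0,0,1)"
| "bvec _ = 0"

definition pd :: "nat \<Rightarrow> (pt \<Rightarrow> real) \<Rightarrow> pt \<Rightarrow> real" where
  "pd i f x = deriv (\<lambda>t. f (x + t *\<^sub>R bvec i)) 0"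

coinductive smooth4 :: "(pt \<Rightarrow> real) \<Rightarrow> bool" where
  "(\<And>x. f differentiable (at x)) \<Longrightarrow> (\<And>i. i \<in> {1..4} \<Longrightarrow> smooth4 (pd i f)) \<Longrightarrow> smooth4 f"

coinductive smooth1 :: "(real \<Rightarrow> real) \<Rightarrow> bool" where
  "(\<And>x. f differentiable (at x)) \<Longrightarrow> smooth1 (deriv f) \<Longrightarrow> smooth1 f"

text \<open>Covector fields and vector fields: component index (1..4) and point.\<close>
type_synonym field = "nat \<Rightarrow> pt \<Rightarrow> real"

definition smooth_field :: "field \<Rightarrow> bool" where
  "smooth_field A \<longleftrightarrow> (\<forall>i\<in>{1..4}. smooth4 (A i))"

definition lie :: "field \<Rightarrow> field \<Rightarrow> field" where
  "lie xi A i x = (\<Sum>k\<in>{1..4}. xi k x * pd k (A i) x) + (\<Sum>k\<in>{1..4}. A k x * pd i (xi k) x)"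

definition admits :: "field \<Rightarrow> field \<Rightarrow> bool" where
  "admits A xi \<longleftrightarrow> (\<forall>i\<in>{1..4}. \<forall>x. lie xi A i x = 0)"

definition vf :: "(pt \<Rightarrow> real) list \<Rightarrow> field" where
  "vf cs k x = (if k \<in> {1..4} then (cs ! (k - 1)) x else 0)"

definition e1 :: field where "e1 = vf [\<lambda>_. 1, \<lambda>_. 0, \<lambda>_. 0, \<lambda>_. 0]"
definition e2 :: field where "e2 = vf [\<lambda>_. 0, \<lambda>_. 1, \<lambda>_. 0, \<lambda>_. 0]"
definition e3 :: field where "e3 = vf [\<lambda>_. 0, \<lambda>_. 0, \<lambda>_. 1, \<lambda>_. 0]"
definition e4 :: field where "e4 = vf [\<lambda>_. 0, \<lambda>_. 0, \<lambda>_. 0, \<lambda>_. 1]"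
definition e12 :: field where
  "e12 = vf [\<lambda>(x1,x2,x3,x4). - x2, \<lambda>(x1,x2,x3,x4). x1, \<lambda>_. 0, \<lambda>_. 0]"
definition e14 :: field where
  "e14 = vf [\<lambda>(x1,x2,x3,x4). x4, \<lambda>_. 0, \<lambda>_. 0, \<lambda>(x1,x2,x3,x4). x1]"

definition vadd :: "field \<Rightarrow> field \<Rightarrow> field" where "vadd a b k x = a k x + b k x"
definition vscale :: "real \<Rightarrow> field \<Rightarrow> field" where "vscale c a k x = c * a k x"

end

theory Submission
  imports Defs
begin

(*
  Invariance under the translations e1, e3 and e2 - e4 says that the partial derivatives
  d1 A_i, d3 A_i and d2 A_i - d4 A_i vanish, i.e. that every component A_i is a function of
  u = x2 + x4 alone.  For such A the x1-dependent terms of L_xi A cancel, and L_xi A = 0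
  becomes the linear ODE system

    lam F1' = F4 - F2,   lam F2' = F1,   lam F3' = 0,   lam F4' = F1

  for the profiles F_i(s) = A_i(0,s,0,0).  For lam = 0 it is algebraic: F1 = 0 and F4 = F2.
  For lam /= 0 it integrates successively: F3 and F4 - F2 are constant, so F1 is affine
  and then F2 is quadratic.
*)

text \<open>The simplifier rewrites \<^term>\<open>1::nat\<close> to \<^term>\<open>Suc 0\<close>, so rewrite rules about
  component indices are stated with \<^term>\<open>Suc 0\<close>.\<close>

lemma atLeastAtMost_Suc0_4: "{Suc 0..4} = {Suc 0,2,3,4}"
  by auto

lemma sum_Suc0_to_4: "(\<Sum>k\<in>{Suc 0..4}. g k) = g (Suc 0) + g 2 + g 3 + g 4"
  by (simp add: atLeastAtMost_Suc0_4 add.assoc)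

lemma ball_Suc0_to_4: "(\<forall>i\<in>{Suc 0..4}. P i) \<longleftrightarrow> P (Suc 0) \<and> P 2 \<and> P 3 \<and> P 4"
  by (simp add: atLeastAtMost_Suc0_4)

lemma bvec_numeral [simp]:
  "bvec 2 = (0,1,0,0)" "bvec 3 = (0,0,1,0)" "bvec 4 = (0,0,0,1)"
  by (simp_all add: numeral_eq_Suc)

lemma vf_nth [simp]:
  "vf [a,b,c,d] (Suc 0) = a" "vf [a,b,c,d] 2 = b" "vf [a,b,c,d] 3 = c" "vf [a,b,c,d] 4 = d"
  by (simp_all add: vf_def fun_eq_iff numeral_eq_Suc)

lemma pd_coordinates:
  "pd 1 f (x1,x2,x3,x4) = deriv (\<lambda>t. f (x1+t,x2,x3,x4)) 0"
  "pd 2 f (x1,x2,x3,x4) = deriv (\<lambda>t. f (x1,x2+t,x3,x4)) 0"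
  "pd 3 f (x1,x2,x3,x4) = deriv (\<lambda>t. f (x1,x2,x3+t,x4)) 0"
  "pd 4 f (x1,x2,x3,x4) = deriv (\<lambda>t. f (x1,x2,x3,x4+t)) 0"
  by (simp_all add: pd_def)

lemma pd_const [simp]: "pd k (\<lambda>_. c) x = 0"
  by (simp add: pd_def)

lemma pd_affine_line:
  assumes "\<And>t. f (x + t *\<^sub>R bvec k) = f x + t * c"
  shows "pd k f x = c"
  unfolding pd_def assms
  by (rule DERIV_imp_deriv) (auto intro!: derivative_eq_intros)

lemma has_real_derivative_along_line:
  fixes f :: "'a::real_normed_vector \<Rightarrow> real"
  assumes "f differentiable (at (x + t *\<^sub>R v))"
  shows "((\<lambda>s. f (x + s *\<^sub>R v)) has_real_derivative frechet_derivative f (at (x + t *\<^sub>R v)) v) (at t)"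
proof -
  let ?D = "frechet_derivative f (at (x + t *\<^sub>R v))"
  have line: "((\<lambda>s. x + s *\<^sub>R v) has_derivative (\<lambda>h. h *\<^sub>R v)) (at t)"
    by (auto intro!: derivative_eq_intros)
  have f: "(f has_derivative ?D) (at (x + t *\<^sub>R v))"
    using assms frechet_derivative_works by blast
  have "((f \<circ> (\<lambda>s. x + s *\<^sub>R v)) has_derivative (?D \<circ> (\<lambda>h. h *\<^sub>R v))) (at t)"
    by (rule diff_chain_at[OF line f])
  moreover have "?D \<circ> (\<lambda>h. h *\<^sub>R v) = (*) (?D v)"
    using has_derivative_linear[OF f] by (simp add: fun_eq_iff linear_scale)
  ultimately show ?thesis
    by (simp add: has_field_derivative_def o_def)
qed

lemma pd_eq_frechet_derivative:
  assumes "f differentiable (at x)"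
  shows "pd k f x = frechet_derivative f (at x) (bvec k)"
  unfolding pd_def
  by (rule DERIV_imp_deriv) (use has_real_derivative_along_line[of f x 0 "bvec k"] assms in simp)

lemma constant_along_direction:
  fixes f :: "'a::real_normed_vector \<Rightarrow> real"
  assumes "\<And>y. f differentiable (at y)" and "\<And>y. frechet_derivative f (at y) v = 0"
  shows "f (p + t *\<^sub>R v) = f p"
proof -
  have "((\<lambda>s. f (p + s *\<^sub>R v)) has_real_derivative 0) (at s)" for s
    using has_real_derivative_along_line[of f p s v] assms by simp
  from DERIV_isconst_all[OF allI[OF this], of t 0] show ?thesis
    by simp
qed

lemma smooth4_differentiable: "smooth4 f \<Longrightarrow> f differentiable (at x)"
  by (erule smooth4.cases) auto

lemma smooth4_pd: "smooth4 f \<Longrightarrow> i \<in> {1..4} \<Longrightarrow> smooth4 (pd i f)"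
  by (erule smooth4.cases) auto

definition profile :: "(pt \<Rightarrow> real) \<Rightarrow> real \<Rightarrow> real" where
  "profile f s = f (0,s,0,0)"

definition function_of_u :: "(pt \<Rightarrow> real) \<Rightarrow> bool" where
  "function_of_u f \<longleftrightarrow> (\<forall>x1 x2 x3 x4. f (x1,x2,x3,x4) = profile f (x2 + x4))"

lemma function_of_u_iff_eq_comp:
  "(\<forall>x1 x2 x3 x4. f (x1,x2,x3,x4) = G (x2 + x4)) \<longleftrightarrow> function_of_u f \<and> profile f = G"
proof
  assume f: "\<forall>x1 x2 x3 x4. f (x1,x2,x3,x4) = G (x2 + x4)"
  then have "profile f = G"
    by (simp add: profile_def fun_eq_iff)
  with f show "function_of_u f \<and> profile f = G"
    by (simp add: function_of_u_def)
qed (simp add: function_of_u_def)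

lemma has_real_derivative_profile:
  assumes "\<And>y. f differentiable (at y)"
  shows "(profile f has_real_derivative pd 2 f (0,s,0,0)) (at s)"
proof -
  have "((\<lambda>s. f (0,s,0,0)) has_real_derivative frechet_derivative f (at (0,s,0,0)) (bvec 2)) (at s)"
    using has_real_derivative_along_line[of f 0 s "bvec 2"] assms by simp
  then show ?thesis
    using pd_eq_frechet_derivative[of f "(0,s,0,0)" 2] assms by (simp add: profile_def[abs_def])
qed

lemma profile_differentiable:
  "(\<And>y. f differentiable (at y)) \<Longrightarrow> profile f differentiable (at s)"
  using has_real_derivative_profile real_differentiable_def by blast

lemma smooth1_profile: "smooth4 f \<Longrightarrow> smooth1 (profile f)"
proof (coinduction arbitrary: f)
  case smooth1
  then have diff: "\<And>y. f differentiable (at y)"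
    by (simp add: smooth4_differentiable)
  have "deriv (profile f) = profile (pd 2 f)"
    using has_real_derivative_profile[OF diff] DERIV_imp_deriv by (auto simp: fun_eq_iff profile_def)
  moreover have "smooth4 (pd 2 f)"
    using smooth4_pd smooth1 by auto
  ultimately show ?case
    using profile_differentiable[OF diff] by blast
qed

lemma pd_comp_u:
  assumes f: "\<forall>y1 y2 y3 y4. f (y1,y2,y3,y4) = G (y2 + y4)"
    and G: "(G has_real_derivative G') (at (x2 + x4))"
  shows "pd 1 f (x1,x2,x3,x4) = 0" "pd 2 f (x1,x2,x3,x4) = G'"
    "pd 3 f (x1,x2,x3,x4) = 0" "pd 4 f (x1,x2,x3,x4) = G'"
proof -
  show "pd 1 f (x1,x2,x3,x4) = 0" "pd 3 f (x1,x2,x3,x4) = 0"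
    using f unfolding pd_coordinates by simp_all
  have "((\<lambda>t. x2 + x4 + t) has_real_derivative 1) (at 0)"
    by (auto intro!: derivative_eq_intros)
  then have "((\<lambda>t. G (x2 + x4 + t)) has_real_derivative G') (at 0)"
    using DERIV_chain'[of "\<lambda>t. x2 + x4 + t" 1 0 UNIV G G'] G by simp
  then have "deriv (\<lambda>t. G (x2 + x4 + t)) 0 = G'"
    by (rule DERIV_imp_deriv)
  then show "pd 2 f (x1,x2,x3,x4) = G'" "pd 4 f (x1,x2,x3,x4) = G'"
    using f unfolding pd_coordinates by (simp_all add: algebra_simps)
qed

lemma pd_function_of_u:
  assumes "function_of_u f" and "\<And>y. f differentiable (at y)"
  shows "pd 1 f (x1,x2,x3,x4) = 0" "pd 2 f (x1,x2,x3,x4) = deriv (profile f) (x2 + x4)"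
    "pd 3 f (x1,x2,x3,x4) = 0" "pd 4 f (x1,x2,x3,x4) = deriv (profile f) (x2 + x4)"
proof -
  have "(profile f has_real_derivative deriv (profile f) (x2 + x4)) (at (x2 + x4))"
    using profile_differentiable[OF assms(2)] by (simp add: DERIV_deriv_iff_real_differentiable)
  from pd_comp_u[OF assms(1)[unfolded function_of_u_def] this]
  show "pd 1 f (x1,x2,x3,x4) = 0" "pd 2 f (x1,x2,x3,x4) = deriv (profile f) (x2 + x4)"
    "pd 3 f (x1,x2,x3,x4) = 0" "pd 4 f (x1,x2,x3,x4) = deriv (profile f) (x2 + x4)"
    by simp_all
qed

lemma function_of_u_iff_pd:
  assumes diff: "\<And>y. f differentiable (at y)"
  shows "function_of_u f \<longleftrightarrow> (\<forall>x. pd 1 f x = 0 \<and> pd 3 f x = 0 \<and> pd 2 f x = pd 4 f x)"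
proof safe
  fix x1 x2 x3 x4
  assume "function_of_u f"
  note pd_function_of_u[OF this diff]
  then show "pd 1 f (x1,x2,x3,x4) = 0" "pd 3 f (x1,x2,x3,x4) = 0"
    "pd 2 f (x1,x2,x3,x4) = pd 4 f (x1,x2,x3,x4)"
    by simp_all
next
  assume pd: "\<forall>x. pd 1 f x = 0 \<and> pd 3 f x = 0 \<and> pd 2 f x = pd 4 f x"
  have linear: "linear (frechet_derivative f (at y))" for y
    using diff frechet_derivative_works has_derivative_linear by blast
  have "frechet_derivative f (at y) (bvec 1) = 0" for y
    using pd pd_eq_frechet_derivative[OF diff] by metis
  note along1 = constant_along_direction[OF diff this]
  have "frechet_derivative f (at y) (bvec 3) = 0" for y
    using pd pd_eq_frechet_derivative[OF diff] by metis
  note along3 = constant_along_direction[OF diff this]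
  have "frechet_derivative f (at y) (bvec 2 - bvec 4) = 0" for y
    using pd by (simp only: linear_diff[OF linear] pd_eq_frechet_derivative[OF diff, symmetric])
  note along24 = constant_along_direction[OF diff this]
  have "f (x1,x2,x3,x4) = f (0,x2+x4,0,0)" for x1 x2 x3 x4
    using along1[of "(x1,x2,x3,x4)" "-x1"] along3[of "(0,x2,x3,x4)" "-x3"]
      along24[of "(0,x2,0,x4)" x4]
    by simp
  then show "function_of_u f"
    by (simp add: function_of_u_def profile_def)
qed

lemma lie_e1: "lie e1 A i x = pd 1 (A i) x"
  by (simp add: lie_def sum_Suc0_to_4 e1_def)

lemma lie_e3: "lie e3 A i x = pd 3 (A i) x"
  by (simp add: lie_def sum_Suc0_to_4 e3_def)

lemma lie_e2_minus_e4: "lie (vadd e2 (vscale (-1) e4)) A i x = pd 2 (A i) x - pd 4 (A i) x"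
  by (simp add: lie_def sum_Suc0_to_4 e2_def e4_def vadd_def[abs_def] vscale_def[abs_def])

lemma admits_translations_iff_function_of_u:
  assumes "\<forall>i\<in>{1..4}. \<forall>y. A i differentiable (at y)"
  shows "admits A e1 \<and> admits A e3 \<and> admits A (vadd e2 (vscale (-1) e4))
    \<longleftrightarrow> (\<forall>i\<in>{1..4}. function_of_u (A i))"
  using assms function_of_u_iff_pd
  by (auto simp: admits_def lie_e1 lie_e3 lie_e2_minus_e4)

definition xi :: "real \<Rightarrow> field" where
  "xi lam = vadd (vadd e12 (vscale (-1) e14)) (vscale lam e2)"

lemma xi_apply:
  "xi lam k (x1,x2,x3,x4) =
    (if k = 1 then - x2 - x4 else if k = 2 then x1 + lam else if k = 4 then - x1 else 0)"
  by (auto simp: xi_def vadd_def vscale_def e12_def e14_def e2_def vf_def atLeastAtMost_Suc0_4)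

text \<open>\<^const>\<open>xi\<close> is affine, so its partial derivatives are its linear part
  \<^term>\<open>xi 0\<close> evaluated at the basis vectors.\<close>

lemma pd_xi: "pd i (xi lam k) x = xi 0 k (bvec i)"
proof (rule pd_affine_line)
  fix t
  obtain x1 x2 x3 x4 where "x = (x1,x2,x3,x4)"
    by (cases x)
  moreover obtain y1 y2 y3 y4 where "bvec i = (y1,y2,y3,y4)"
    by (cases "bvec i")
  ultimately show "xi lam k (x + t *\<^sub>R bvec i) = xi lam k x + t * xi 0 k (bvec i)"
    by (simp add: xi_apply algebra_simps)
qed

definition xi_ode :: "real \<Rightarrow> (nat \<Rightarrow> real \<Rightarrow> real) \<Rightarrow> bool" where
  "xi_ode lam F \<longleftrightarrow> (\<forall>s.
     lam * deriv (F 1) s = F 4 s - F 2 s \<and> lam * deriv (F 2) s = F 1 s \<and>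
     lam * deriv (F 3) s = 0 \<and> lam * deriv (F 4) s = F 1 s)"

lemma lie_xi_function_of_u:
  fixes x1 x2 x3 x4 :: real
  assumes fu: "\<forall>i\<in>{1..4}. function_of_u (A i)"
    and diff: "\<forall>i\<in>{1..4}. \<forall>y. A i differentiable (at y)"
  defines "F j \<equiv> profile (A j)" and "u \<equiv> x2 + x4"
  shows "lie (xi lam) A 1 (x1,x2,x3,x4) = lam * deriv (F 1) u + F 2 u - F 4 u"
    and "lie (xi lam) A 2 (x1,x2,x3,x4) = lam * deriv (F 2) u - F 1 u"
    and "lie (xi lam) A 3 (x1,x2,x3,x4) = lam * deriv (F 3) u"
    and "lie (xi lam) A 4 (x1,x2,x3,x4) = lam * deriv (F 4) u - F 1 u"
proof -
  have A: "A j (x1,x2,x3,x4) = F j u" if "j \<in> {1..4}" for j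
    using fu that by (simp add: function_of_u_def F_def u_def)
  have pd_A: "pd 1 (A i) (x1,x2,x3,x4) = 0" "pd 2 (A i) (x1,x2,x3,x4) = deriv (F i) u"
    "pd 3 (A i) (x1,x2,x3,x4) = 0" "pd 4 (A i) (x1,x2,x3,x4) = deriv (F i) u"
    if "i \<in> {1..4}" for i
  proof -
    have "function_of_u (A i)" "\<And>y. A i differentiable (at y)"
      using fu diff that by auto
    from pd_function_of_u[OF this] show "pd 1 (A i) (x1,x2,x3,x4) = 0"
      "pd 2 (A i) (x1,x2,x3,x4) = deriv (F i) u" "pd 3 (A i) (x1,x2,x3,x4) = 0"
      "pd 4 (A i) (x1,x2,x3,x4) = deriv (F i) u"
      by (simp_all add: F_def u_def)
  qed
  show "lie (xi lam) A 1 (x1,x2,x3,x4) = lam * deriv (F 1) u + F 2 u - F 4 u"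
    and "lie (xi lam) A 2 (x1,x2,x3,x4) = lam * deriv (F 2) u - F 1 u"
    and "lie (xi lam) A 3 (x1,x2,x3,x4) = lam * deriv (F 3) u"
    and "lie (xi lam) A 4 (x1,x2,x3,x4) = lam * deriv (F 4) u - F 1 u"
    by (simp_all add: lie_def sum_Suc0_to_4 xi_apply pd_xi A pd_A[unfolded One_nat_def] algebra_simps)
qed

lemma admits_xi_iff_xi_ode:
  assumes "\<forall>i\<in>{1..4}. function_of_u (A i)"
    and "\<forall>i\<in>{1..4}. \<forall>y. A i differentiable (at y)"
  shows "admits A (xi lam) \<longleftrightarrow> xi_ode lam (\<lambda>i. profile (A i))"
proof -
  note lie = lie_xi_function_of_u[OF assms, unfolded One_nat_def]
  show ?thesis
  proof
    assume "admits A (xi lam)"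
    then have "lie (xi lam) A i (0,s,0,0) = 0" if "i \<in> {1..4}" for i s
      using that by (simp add: admits_def)
    from this[of "Suc 0"] this[of 2] this[of 3] this[of 4]
    show "xi_ode lam (\<lambda>i. profile (A i))"
      by (simp add: xi_ode_def lie eq_diff_eq)
  next
    assume ode: "xi_ode lam (\<lambda>i. profile (A i))"
    have "lie (xi lam) A i (x1,x2,x3,x4) = 0" if "i \<in> {Suc 0, 2, 3, 4}" for i x1 x2 x3 x4
      using that ode by (auto simp: xi_ode_def lie)
    then show "admits A (xi lam)"
      by (auto simp: admits_def atLeastAtMost_Suc0_4)
  qed
qed

lemma eq_plus_const_if_same_derivative:
  fixes f g :: "real \<Rightarrow> real"
  assumes "\<And>s. (f has_real_derivative D s) (at s)" and "\<And>s. (g has_real_derivative D s) (at s)"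
  shows "f s = g s + (f 0 - g 0)"
proof -
  have "((\<lambda>s. f s - g s) has_real_derivative 0) (at s)" for s
    using DERIV_diff[OF assms] by simp
  from DERIV_isconst_all[OF allI[OF this], of s 0] show ?thesis
    by simp
qed

lemma xi_ode_iff_polynomial:
  assumes lam: "lam \<noteq> 0" and diff: "\<forall>i\<in>{1..4}. \<forall>s. F i differentiable (at s)"
  shows "xi_ode lam F \<longleftrightarrow> (\<exists>C1 C2 C3 C4. \<forall>s.
    F 1 s = C2 / lam * s + C3 \<and> F 2 s = C2 / (2 * lam\<^sup>2) * s\<^sup>2 + C3 / lam * s + C4 \<and>
    F 3 s = C1 \<and> F 4 s = F 2 s + C2)"
proof
  assume ode: "xi_ode lam F"
  have D: "(F i has_real_derivative deriv (F i) s) (at s)" if "i \<in> {1..4}" for i s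
    using diff that by (simp add: DERIV_deriv_iff_real_differentiable)
  have D1: "(F 1 has_real_derivative (F 4 s - F 2 s) / lam) (at s)"
    and D2: "(F 2 has_real_derivative F 1 s / lam) (at s)"
    and D3: "(F 3 has_real_derivative 0) (at s)"
    and D4: "(F 4 has_real_derivative F 1 s / lam) (at s)" for s
  proof -
    have "deriv (F 1) s = (F 4 s - F 2 s) / lam" "deriv (F 2) s = F 1 s / lam"
      "deriv (F 3) s = 0" "deriv (F 4) s = F 1 s / lam"
      using ode lam by (simp_all add: xi_ode_def field_simps)
    with D[of 1 s] D[of 2 s] D[of 3 s] D[of 4 s]
    show "(F 1 has_real_derivative (F 4 s - F 2 s) / lam) (at s)"
      "(F 2 has_real_derivative F 1 s / lam) (at s)" "(F 3 has_real_derivative 0) (at s)"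
      "(F 4 has_real_derivative F 1 s / lam) (at s)"
      by simp_all
  qed
  define C2 where "C2 = F 4 0 - F 2 0"
  define C3 where "C3 = F 1 0"
  have F3: "F 3 s = F 3 0" for s
    using eq_plus_const_if_same_derivative[OF D3 DERIV_const, of s] by simp
  have F4: "F 4 s = F 2 s + C2" for s
    using eq_plus_const_if_same_derivative[OF D4 D2, of s] by (simp add: C2_def)
  have dF1: "(F 1 has_real_derivative C2 / lam) (at s)" for s
    using D1[of s] F4[of s] lam by simp
  have dP1: "((\<lambda>s. C2 / lam * s) has_real_derivative C2 / lam) (at s)" for s
    using lam by (auto intro!: derivative_eq_intros)
  have F1: "F 1 s = C2 / lam * s + C3" for s
    using eq_plus_const_if_same_derivative[OF dF1 dP1, of s] by (simp add: C3_def)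
  have dP2: "((\<lambda>s. C2 / (2 * lam\<^sup>2) * s\<^sup>2 + C3 / lam * s)
      has_real_derivative F 1 s / lam) (at s)" for s
    unfolding F1 using lam by (auto intro!: derivative_eq_intros simp: field_simps power2_eq_square)
  have F2: "F 2 s = C2 / (2 * lam\<^sup>2) * s\<^sup>2 + C3 / lam * s + F 2 0" for s
    using eq_plus_const_if_same_derivative[OF D2 dP2, of s] by simp
  show "\<exists>C1 C2 C3 C4. \<forall>s.
    F 1 s = C2 / lam * s + C3 \<and> F 2 s = C2 / (2 * lam\<^sup>2) * s\<^sup>2 + C3 / lam * s + C4 \<and>
    F 3 s = C1 \<and> F 4 s = F 2 s + C2"
    using F1 F2 F3 F4 by blast
next
  assume "\<exists>C1 C2 C3 C4. \<forall>s.
    F 1 s = C2 / lam * s + C3 \<and> F 2 s = C2 / (2 * lam\<^sup>2) * s\<^sup>2 + C3 / lam * s + C4 \<and>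
    F 3 s = C1 \<and> F 4 s = F 2 s + C2"
  then obtain C1 C2 C3 C4 where F: "\<forall>s.
    F 1 s = C2 / lam * s + C3 \<and> F 2 s = C2 / (2 * lam\<^sup>2) * s\<^sup>2 + C3 / lam * s + C4 \<and>
    F 3 s = C1 \<and> F 4 s = F 2 s + C2"
    by blast
  then have Feq: "F 1 = (\<lambda>s. C2 / lam * s + C3)"
    "F 2 = (\<lambda>s. C2 / (2 * lam\<^sup>2) * s\<^sup>2 + C3 / lam * s + C4)" "F 3 = (\<lambda>s. C1)" "F 4 = (\<lambda>s. C2 / (2 * lam\<^sup>2) * s\<^sup>2 + C3 / lam * s + C4 + C2)"
    by (simp_all add: fun_eq_iff)
  have "deriv (F 1) s = C2 / lam" "deriv (F 2) s = (C2 / lam * s + C3) / lam"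
    "deriv (F 3) s = 0" "deriv (F 4) s = (C2 / lam * s + C3) / lam" for s
    unfolding Feq
    by (rule DERIV_imp_deriv;
        use lam in \<open>auto intro!: derivative_eq_intros simp: field_simps power2_eq_square\<close>)+
  with F show "xi_ode lam F"
    using lam by (simp add: xi_ode_def)
qed

lemma admits_iff_function_of_u_xi_ode:
  assumes "\<forall>i\<in>{1..4}. \<forall>y. A i differentiable (at y)"
  shows "admits A (xi lam) \<and> admits A e1 \<and> admits A e3 \<and> admits A (vadd e2 (vscale (-1) e4))
    \<longleftrightarrow> (\<forall>i\<in>{1..4}. function_of_u (A i)) \<and> xi_ode lam (\<lambda>i. profile (A i))"
  using admits_translations_iff_function_of_u[OF assms] admits_xi_iff_xi_ode[OF _ assms]
  by blast

lemma function_of_u_xi_ode_iff_lam_nonzero: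
  assumes lam: "lam \<noteq> 0" and diff: "\<forall>i\<in>{1..4}. \<forall>y. A i differentiable (at y)"
  shows "(\<forall>i\<in>{1..4}. function_of_u (A i)) \<and> xi_ode lam (\<lambda>i. profile (A i)) \<longleftrightarrow>
    (\<exists>C1 C2 C3 C4 :: real. \<forall>x1 x2 x3 x4. let u = x2 + x4 in
       A 1 (x1,x2,x3,x4) = C2 / lam * u + C3 \<and>
       A 2 (x1,x2,x3,x4) = C2 / (2 * lam\<^sup>2) * u\<^sup>2 + C3 / lam * u + C4 \<and>
       A 3 (x1,x2,x3,x4) = C1 \<and>
       A 4 (x1,x2,x3,x4) = A 2 (x1,x2,x3,x4) + C2)"
    (is "?fu \<and> ?ode \<longleftrightarrow> ?poly")
proof -
  have "\<forall>i\<in>{1..4}. \<forall>s. profile (A i) differentiable (at s)"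
    using diff profile_differentiable by blast
  note ode_iff = xi_ode_iff_polynomial[OF lam this]
  show ?thesis
  proof
    assume fu_ode: "?fu \<and> ?ode"
    then obtain C1 C2 C3 C4 where "\<forall>s.
        profile (A 1) s = C2 / lam * s + C3 \<and>
        profile (A 2) s = C2 / (2 * lam\<^sup>2) * s\<^sup>2 + C3 / lam * s + C4 \<and>
        profile (A 3) s = C1 \<and> profile (A 4) s = profile (A 2) s + C2"
      using ode_iff by blast
    moreover have "A i (x1,x2,x3,x4) = profile (A i) (x2 + x4)" if "i \<in> {1..4}" for i x1 x2 x3 x4
      using fu_ode that by (simp add: function_of_u_def)
    ultimately show ?poly
      by (auto simp: Let_def)
  next
    assume ?poly
    then obtain C1 C2 C3 C4 where A: "\<forall>x1 x2 x3 x4.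
         A 1 (x1,x2,x3,x4) = C2 / lam * (x2 + x4) + C3 \<and>
         A 2 (x1,x2,x3,x4) = C2 / (2 * lam\<^sup>2) * (x2 + x4)\<^sup>2 + C3 / lam * (x2 + x4) + C4 \<and>
         A 3 (x1,x2,x3,x4) = C1 \<and>
         A 4 (x1,x2,x3,x4) = A 2 (x1,x2,x3,x4) + C2"
      unfolding Let_def by blast
    have "function_of_u (A 1) \<and> profile (A 1) = (\<lambda>s. C2 / lam * s + C3)"
      and "function_of_u (A 2) \<and> profile (A 2) = (\<lambda>s. C2 / (2 * lam\<^sup>2) * s\<^sup>2 + C3 / lam * s + C4)"
      and "function_of_u (A 3) \<and> profile (A 3) = (\<lambda>s. C1)"
      and "function_of_u (A 4) \<and>
        profile (A 4) = (\<lambda>s. C2 / (2 * lam\<^sup>2) * s\<^sup>2 + C3 / lam * s + C4 + C2)"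
      unfolding function_of_u_iff_eq_comp[symmetric] using A by simp_all
    then show "?fu \<and> ?ode"
      unfolding ode_iff by (auto simp: ball_Suc0_to_4)
  qed
qed

lemma function_of_u_xi_ode_0_iff:
  assumes "smooth_field A"
  shows "(\<forall>i\<in>{1..4}. function_of_u (A i)) \<and> xi_ode 0 (\<lambda>i. profile (A i)) \<longleftrightarrow>
    (\<exists>\<Phi> \<Psi> :: real \<Rightarrow> real. smooth1 \<Phi> \<and> smooth1 \<Psi> \<and> (\<forall>x1 x2 x3 x4. let u = x2 + x4 in
       A 1 (x1,x2,x3,x4) = 0 \<and>
       A 2 (x1,x2,x3,x4) = \<Phi> u \<and> A 4 (x1,x2,x3,x4) = \<Phi> u \<and>
       A 3 (x1,x2,x3,x4) = \<Psi> u))"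
    (is "?fu \<and> ?ode \<longleftrightarrow> ?profiles")
proof
  assume fu_ode: "?fu \<and> ?ode"
  have "smooth1 (profile (A 2))" "smooth1 (profile (A 3))"
    using assms smooth1_profile by (auto simp: smooth_field_def)
  moreover have "A i (x1,x2,x3,x4) = profile (A i) (x2 + x4)" if "i \<in> {1..4}" for i x1 x2 x3 x4
    using fu_ode that by (simp add: function_of_u_def)
  ultimately show ?profiles
    using fu_ode
    by (intro exI[of _ "profile (A 2)"] exI[of _ "profile (A 3)"]) (auto simp: xi_ode_def Let_def)
next
  assume ?profiles
  then obtain \<Phi> \<Psi> where "\<forall>x1 x2 x3 x4.
       A 1 (x1,x2,x3,x4) = (\<lambda>_. 0) (x2 + x4) \<and>
       A 2 (x1,x2,x3,x4) = \<Phi> (x2 + x4) \<and> A 4 (x1,x2,x3,x4) = \<Phi> (x2 + x4) \<and>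
       A 3 (x1,x2,x3,x4) = \<Psi> (x2 + x4)"
    unfolding Let_def by blast
  then have "function_of_u (A 1) \<and> profile (A 1) = (\<lambda>_. 0)"
    and "function_of_u (A 2) \<and> profile (A 2) = \<Phi>"
    and "function_of_u (A 3) \<and> profile (A 3) = \<Psi>"
    and "function_of_u (A 4) \<and> profile (A 4) = \<Phi>"
    unfolding function_of_u_iff_eq_comp[symmetric] by simp_all
  then show "?fu \<and> ?ode"
    by (simp add: ball_Suc0_to_4 xi_ode_def)
qed

theorem mainTheorem14:
  fixes A :: field and lam :: real
  assumes "smooth_field A"
  shows "(admits A (vadd (vadd e12 (vscale (-1) e14)) (vscale lam e2)) \<and> admits A e1
          \<and> admits A e3 \<and> admits A (vadd e2 (vscale (-1) e4)))
    \<longleftrightarrow>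
    (if lam \<noteq> 0 then
       (\<exists>C1 C2 C3 C4 :: real. \<forall>x1 x2 x3 x4. let u = x2 + x4 in
          A 1 (x1,x2,x3,x4) = C2 / lam * u + C3 \<and>
          A 2 (x1,x2,x3,x4) = C2 / (2 * lam\<^sup>2) * u\<^sup>2 + C3 / lam * u + C4 \<and>
          A 3 (x1,x2,x3,x4) = C1 \<and>
          A 4 (x1,x2,x3,x4) = A 2 (x1,x2,x3,x4) + C2)
     else
       (\<exists>\<Phi> \<Psi> :: real \<Rightarrow> real. smooth1 \<Phi> \<and> smooth1 \<Psi> \<and> (\<forall>x1 x2 x3 x4. let u = x2 + x4 in
          A 1 (x1,x2,x3,x4) = 0 \<and>
          A 2 (x1,x2,x3,x4) = \<Phi> u \<and> A 4 (x1,x2,x3,x4) = \<Phi> u \<and>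
          A 3 (x1,x2,x3,x4) = \<Psi> u)))"
proof -
  have diff: "\<forall>i\<in>{1..4}. \<forall>y. A i differentiable (at y)"
    using assms smooth4_differentiable by (auto simp: smooth_field_def)
  show ?thesis
    unfolding xi_def[symmetric] admits_iff_function_of_u_xi_ode[OF diff]
    using function_of_u_xi_ode_iff_lam_nonzero[OF _ diff] function_of_u_xi_ode_0_iff[OF assms]
    by simp
qed

end
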